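(* Let $n\ge1$ and let $\mathbf d=(d_1<\dots<d_s)$ with $1\le d_1$, $d_s\le n$. Then the set of Bruhat polytopes $\{Q^{\mathbf d}_{u,v}:[u,v]\in\operatorname{BI}(\mathbf d,n)\}$ equals the set of twisted Bruhat polytopes $\{\widetilde Q^{\mathbf d}_{u,v}:[u,v]\in\widetilde{\operatorname{BI}}(\mathbf d,n)\}$.
   Context: $\operatorname{Sym}_n$ carries the Bruhat order: $u\le v$ iff some (equivalently every) reduced word for $v$ in the adjacent transpositions $\tau_i=(i,i+1)$ contains a subword that is a word for $u$. For $B\subseteq[n]$, $e_B=\sum_{i\in B}e_i$. Untwisted: for $x\in\operatorname{Sym}_n$ let $\pi^{\mathbf d}\phi(x)\in\mathbb{R}^n$ be the vector whose $k$-th coordinate is $\#\{j: x(k)\ge n+1-d_j\}$ (the image of the permutahedron vertex $(x(1),\dots,x(n))$). $\operatorname{BI}(\mathbf d,n)$ is the set of Bruhat intervals $[u,v]$ such that $v$ is Bruhat-minimal among all $x$ with $\pi^{\mathbf d}\phi(x)=\pi^{\mathbf d}\phi(v)$, and $Q^{\mathbf d}_{u,v}=\operatorname{conv}\{\pi^{\mathbf d}\phi(x):x\in[u,v]\}$. Twisted: for $x\in\operatorname{Sym}_n$ let $\pi^{\mathbf d}\psi(x)=e_{x([d_1])}+\dots+e_{x([d_s])}$ (the image of the vertex $x\cdot(n,n-1,\dots,1)$ of the permutahedron, where $(x\cdot y)_i=y_{x^{-1}(i)}$). $\widetilde{\operatorname{BI}}(\mathbf d,n)$ is the set of Bruhat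 intervals $[u,v]$ such that $v$ is Bruhat-minimal among all $x$ with $\pi^{\mathbf d}\psi(x)=\pi^{\mathbf d}\psi(v)$, and $\widetilde Q^{\mathbf d}_{u,v}=\operatorname{conv}\{\pi^{\mathbf d}\psi(x):x\in[u,v]\}$. *)

theory Defs
  imports "HOL-Analysis.Analysis" "HOL-Combinatorics.Combinatorics" "HOL-Library.Sublist"
begin

definition Sym :: "nat \<Rightarrow> (nat \<Rightarrow> nat) set" where
  "Sym n = {x. x permutes {1..n}}"

definition tau :: "nat \<Rightarrow> nat \<Rightarrow> nat" where
  "tau i = Transposition.transpose i (Suc i)"

definition word_prod :: "nat list \<Rightarrow> nat \<Rightarrow> nat" where
  "word_prod w = foldr (\<lambda>i f. tau i \<circ> f) w id"

definition is_word :: "nat \<Rightarrow> nat list \<Rightarrow> (nat \<Rightarrow> nat) \<Rightarrow> bool" where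
  "is_word n w x \<longleftrightarrow> set w \<subseteq> {1..<n} \<and> word_prod w = x"

definition reduced_word :: "nat \<Rightarrow> nat list \<Rightarrow> (nat \<Rightarrow> nat) \<Rightarrow> bool" where
  "reduced_word n w x \<longleftrightarrow> is_word n w x \<and> (\<forall>w'. is_word n w' x \<longrightarrow> length w \<le> length w')"

definition bruhat_le :: "nat \<Rightarrow> (nat \<Rightarrow> nat) \<Rightarrow> (nat \<Rightarrow> nat) \<Rightarrow> bool" where
  "bruhat_le n u v \<longleftrightarrow> (\<exists>w. reduced_word n w v \<and> (\<exists>w'. subseq w' w \<and> word_prod w' = u))"

definition bruhat_interval :: "nat \<Rightarrow> (nat \<Rightarrow> nat) \<Rightarrow> (nat \<Rightarrow> nat) \<Rightarrow> (nat \<Rightarrow> nat) set" where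
  "bruhat_interval n u v = {x \<in> Sym n. bruhat_le n u x \<and> bruhat_le n x v}"

(* vectors of R^n are represented as nat => real with coordinates 1..n (zero elsewhere);
   convex hull = set of all finite convex combinations *)
definition conv :: "(nat \<Rightarrow> real) set \<Rightarrow> (nat \<Rightarrow> real) set" where
  "conv S = {y. \<exists>F c. finite F \<and> F \<subseteq> S \<and> (\<forall>p\<in>F. 0 \<le> c p) \<and> sum c F = 1 \<and>
                      y = (\<lambda>k. \<Sum>p\<in>F. c p * p k)}"

definition e_set :: "nat \<Rightarrow> nat set \<Rightarrow> nat \<Rightarrow> real" where
  "e_set n B = (\<lambda>k. if k \<in> B \<inter> {1..n} then 1 else 0)"

definition piphi :: "nat \<Rightarrow> nat list \<Rightarrow> (nat \<Rightarrow> nat) \<Rightarrow> nat \<Rightarrow> real" where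
  "piphi n d x = (\<lambda>k. if k \<in> {1..n} then real (card {j. j < length d \<and> x k \<ge> n + 1 - d ! j}) else 0)"

definition pipsi :: "nat \<Rightarrow> nat list \<Rightarrow> (nat \<Rightarrow> nat) \<Rightarrow> nat \<Rightarrow> real" where
  "pipsi n d x = (\<lambda>k. \<Sum>j<length d. e_set n (x ` {1..d ! j}) k)"

definition BI_gen :: "nat \<Rightarrow> ((nat \<Rightarrow> nat) \<Rightarrow> nat \<Rightarrow> real) \<Rightarrow> ((nat \<Rightarrow> nat) \<times> (nat \<Rightarrow> nat)) set" where
  "BI_gen n f = {(u, v). u \<in> Sym n \<and> v \<in> Sym n \<and> bruhat_le n u v \<and>
      (\<forall>x\<in>Sym n. f x = f v \<and> bruhat_le n x v \<longrightarrow> x = v)}"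

definition BI :: "nat list \<Rightarrow> nat \<Rightarrow> ((nat \<Rightarrow> nat) \<times> (nat \<Rightarrow> nat)) set" where
  "BI d n = BI_gen n (piphi n d)"

definition BI_tw :: "nat list \<Rightarrow> nat \<Rightarrow> ((nat \<Rightarrow> nat) \<times> (nat \<Rightarrow> nat)) set" where
  "BI_tw d n = BI_gen n (pipsi n d)"

definition Q :: "nat list \<Rightarrow> nat \<Rightarrow> (nat \<Rightarrow> nat) \<Rightarrow> (nat \<Rightarrow> nat) \<Rightarrow> (nat \<Rightarrow> real) set" where
  "Q d n u v = conv (piphi n d ` bruhat_interval n u v)"

definition Q_tw :: "nat list \<Rightarrow> nat \<Rightarrow> (nat \<Rightarrow> nat) \<Rightarrow> (nat \<Rightarrow> nat) \<Rightarrow> (nat \<Rightarrow> real) set" where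
  "Q_tw d n u v = conv (pipsi n d ` bruhat_interval n u v)"

end

theory Submission
  imports Defs
begin

(*
  Both families consist of all polytopes conv (f ` [u, v]) over arbitrary Bruhat intervals, f being
  the respective projection: the minimality of the top v in its fibre costs nothing.

  The twisted projection is invariant under right multiplication by the transpositions tau i inside
  the blocks of d, and its fibres are the cosets v W_J of the corresponding Young subgroup. If v has
  a descent i inside a block, the lifting property shows that [u, v] has the same image as
  [u, v tau_i] or as [u tau_i, v tau_i], according as u has an ascent or a descent at i; by induction
  on the length of v we may thus assume v ascending on every block. Such a v is Bruhat-minimal in
  its coset: its inversions all lie between blocks and reappear in every other x of the coset,
  which has an extra inversion inside a block, so x is longer than v and cannot lie below it.

  The untwisted projection is invariant under left multiplication instead, and the same argument
  applies after passing to inverses. Finally x |-> x^-1 w0 is an order-reversing bijection of Sym_n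
  carrying the untwisted vertex of x to the twisted vertex of x^-1 w0, so the two projections have
  the same images of intervals. No hypothesis on n or d is needed.
*)

section \<open>Permutations of {1..n} and adjacent transpositions\<close>

lemma tau_apply [simp]:
  "tau i i = Suc i" "tau i (Suc i) = i" "t \<noteq> i \<Longrightarrow> t \<noteq> Suc i \<Longrightarrow> tau i t = t"
  unfolding tau_def by (auto simp: transpose_def)

lemma tau_tau [simp]: "tau i (tau i t) = t"
  unfolding tau_def by (auto simp: transpose_def)

lemma comp_tau_tau [simp]: "x \<circ> tau i \<circ> tau i = x"
  by (simp add: fun_eq_iff)

lemma inj_tau: "inj (tau i)"
  by (metis tau_tau injI)

lemma inv_tau: "inv (tau i) = tau i"
  by (rule inv_unique_comp) (simp_all add: fun_eq_iff)

lemma tau_less_tau: "a < b \<Longrightarrow> (a, b) \<noteq> (i, Suc i) \<Longrightarrow> tau i a < tau i b"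
  by (cases "a = i"; cases "a = Suc i"; cases "b = i"; cases "b = Suc i") auto

lemma tau_in_atLeastAtMost: "1 \<le> i \<Longrightarrow> i < n \<Longrightarrow> a \<in> {1..n} \<Longrightarrow> tau i a \<in> {1..n}"
  by (cases "a = i"; cases "a = Suc i") auto

lemma tau_image_atLeastAtMost: assumes "1 \<le> i" "m \<noteq> i" shows "tau i ` {1..m} = {1..m}"
proof -
  have closed: "tau i t \<in> {1..m}" if "t \<in> {1..m}" for t
    using that assms by (cases "t = i"; cases "t = Suc i") auto
  have "{1..m} \<subseteq> tau i ` {1..m}"
  proof
    fix y assume "y \<in> {1..m}"
    then show "y \<in> tau i ` {1..m}" using closed[of y] by (metis image_eqI tau_tau)
  qed
  then show ?thesis using closed by blast
qed

lemma mem_Sym_iff: "x \<in> Sym n \<longleftrightarrow> x permutes {1..n}"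
  by (simp add: Sym_def)

lemma id_in_Sym [simp]: "id \<in> Sym n"
  unfolding mem_Sym_iff by (rule permutes_id)

lemma tau_in_Sym: "1 \<le> i \<Longrightarrow> i < n \<Longrightarrow> tau i \<in> Sym n"
  unfolding mem_Sym_iff tau_def by (intro permutes_swap_id) auto

lemma Sym_comp: "x \<in> Sym n \<Longrightarrow> y \<in> Sym n \<Longrightarrow> x \<circ> y \<in> Sym n"
  unfolding mem_Sym_iff by (rule permutes_compose)

lemma Sym_comp_tau: "x \<in> Sym n \<Longrightarrow> 1 \<le> i \<Longrightarrow> i < n \<Longrightarrow> x \<circ> tau i \<in> Sym n"
  by (simp add: Sym_comp tau_in_Sym)

lemma Sym_inv: "x \<in> Sym n \<Longrightarrow> inv x \<in> Sym n"
  unfolding mem_Sym_iff by (rule permutes_inv)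

lemma Sym_inj: "x \<in> Sym n \<Longrightarrow> inj x"
  unfolding mem_Sym_iff by (rule permutes_inj)

lemma Sym_bij: "x \<in> Sym n \<Longrightarrow> bij x"
  unfolding mem_Sym_iff by (rule permutes_bij)

lemma Sym_apply_in: "x \<in> Sym n \<Longrightarrow> t \<in> {1..n} \<Longrightarrow> x t \<in> {1..n}"
  using permutes_in_image[of x "{1..n}" t] by (simp add: mem_Sym_iff)

lemma Sym_apply_out: "x \<in> Sym n \<Longrightarrow> t \<notin> {1..n} \<Longrightarrow> x t = t"
  unfolding mem_Sym_iff by (simp add: permutes_not_in)

lemma Sym_inv_inv [simp]: "x \<in> Sym n \<Longrightarrow> inv (inv x) = x"
  unfolding mem_Sym_iff by (rule permutes_inv_inv)

lemma Sym_inv_apply [simp]: "x \<in> Sym n \<Longrightarrow> inv x (x t) = t" "x \<in> Sym n \<Longrightarrow> x (inv x t) = t"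
  unfolding mem_Sym_iff by (simp_all add: permutes_inverses)

lemma Sym_apply_Suc_neq: "x \<in> Sym n \<Longrightarrow> x i \<noteq> x (Suc i)"
  using Sym_inj by (metis injD n_not_Suc_n)

lemma Sym_below_id: assumes "x \<in> Sym n" "\<forall>t\<in>{1..n}. x t \<le> t" shows "x = id"
proof -
  have "x t = t" if "t \<in> {1..n}" for t
    using that
  proof (induction t rule: less_induct)
    case (less t)
    show ?case
    proof (rule ccontr)
      assume ne: "x t \<noteq> t"
      moreover have "x t \<le> t" using assms(2) less.prems by blast
      ultimately have "x t < t" by simp
      then have "x (x t) = x t" using less.IH Sym_apply_in[OF assms(1) less.prems] by blast
      then show False using Sym_inj[OF assms(1)] ne by (metis injD)
    qed
  qed
  then show ?thesis using Sym_apply_out[OF assms(1)] by (metis eq_id_iff)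
qed

lemma Sym_ascending_eq_id:
  assumes "x \<in> Sym n" "\<forall>i. 1 \<le> i \<and> i < n \<longrightarrow> x i < x (Suc i)"
  shows "x = id"
proof -
  have above: "t \<le> x t" if "t \<in> {1..n}" for t
    using that
  proof (induction t)
    case (Suc t)
    show ?case
    proof (cases "t = 0")
      case True then show ?thesis using Sym_apply_in[OF assms(1) Suc.prems] by simp
    next
      case False
      then have "t \<le> x t" "x t < x (Suc t)" using Suc assms(2) by auto
      then show ?thesis by simp
    qed
  qed simp
  have "inv x = id"
  proof (rule Sym_below_id[OF Sym_inv[OF assms(1)]], rule ballI)
    fix m assume "m \<in> {1..n}"
    then have "inv x m \<le> x (inv x m)" using above Sym_apply_in[OF Sym_inv[OF assms(1)]] by blast
    then show "inv x m \<le> m" using assms(1) by simp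
  qed
  then have "inv (inv x) = id" by simp
  then show ?thesis using assms(1) by simp
qed

lemma word_prod_Nil [simp]: "word_prod [] = id"
  by (simp add: word_prod_def)

lemma foldr_tau_comp: "foldr (\<lambda>i f. tau i \<circ> f) w g = word_prod w \<circ> g"
  by (induction w) (auto simp: word_prod_def)

lemma word_prod_snoc: "word_prod (w @ [a]) = word_prod w \<circ> tau a"
  using foldr_tau_comp[of w "tau a"] by (simp add: word_prod_def)

lemma word_prod_in_Sym: "set w \<subseteq> {1..<n} \<Longrightarrow> word_prod w \<in> Sym n"
proof (induction w rule: rev_induct)
  case (snoc a w)
  then show ?case unfolding word_prod_snoc by (intro Sym_comp_tau) auto
qed simp

section \<open>The rank criterion for the Bruhat order\<close>

definition bruhat_rank :: "nat \<Rightarrow> (nat \<Rightarrow> nat) \<Rightarrow> nat \<Rightarrow> nat \<Rightarrow> nat" where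
  "bruhat_rank n x p k = card {t\<in>{1..n}. t \<le> p \<and> x t \<le> k}"

text \<open>The rank-matrix criterion; by \<open>bruhat_le_iff_rank_le\<close> it is the Bruhat order.\<close>

definition rank_le :: "nat \<Rightarrow> (nat \<Rightarrow> nat) \<Rightarrow> (nat \<Rightarrow> nat) \<Rightarrow> bool" where
  "rank_le n u v \<longleftrightarrow> (\<forall>p k. bruhat_rank n v p k \<le> bruhat_rank n u p k)"

lemma rank_le_refl: "rank_le n x x"
  by (simp add: rank_le_def)

lemma rank_le_trans: "rank_le n x y \<Longrightarrow> rank_le n y z \<Longrightarrow> rank_le n x z"
  unfolding rank_le_def using le_trans by blast

lemma bruhat_rank_0 [simp]: "bruhat_rank n x 0 k = 0"
  unfolding bruhat_rank_def by auto

lemma bruhat_rank_step: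
  assumes "1 \<le> p" "p \<le> n"
  shows "bruhat_rank n x p k = bruhat_rank n x (p - 1) k + (if x p \<le> k then 1 else 0)"
proof -
  have "{t\<in>{1..n}. t \<le> p \<and> x t \<le> k} =
      {t\<in>{1..n}. t \<le> p - 1 \<and> x t \<le> k} \<union> (if x p \<le> k then {p} else {})"
    using assms by (intro set_eqI, case_tac "xa = p") auto
  then show ?thesis unfolding bruhat_rank_def by (auto simp: card_insert_if)
qed

lemma bruhat_rank_comp_tau_other:
  assumes "1 \<le> i" "i < n" "p \<noteq> i"
  shows "bruhat_rank n (x \<circ> tau i) p k = bruhat_rank n x p k"
proof -
  have "{t\<in>{1..n}. t \<le> p \<and> (x \<circ> tau i) t \<le> k} = tau i ` {t\<in>{1..n}. t \<le> p \<and> x t \<le> k}"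
  proof (rule set_eqI, rule iffI)
    fix y assume y: "y \<in> {t\<in>{1..n}. t \<le> p \<and> (x \<circ> tau i) t \<le> k}"
    have "tau i y \<in> {t\<in>{1..n}. t \<le> p \<and> x t \<le> k}"
      using y assms by (cases "y = i"; cases "y = Suc i") auto
    then show "y \<in> tau i ` {t\<in>{1..n}. t \<le> p \<and> x t \<le> k}"
      by (metis tau_tau image_eqI)
  next
    fix y assume "y \<in> tau i ` {t\<in>{1..n}. t \<le> p \<and> x t \<le> k}"
    then obtain z where z: "z \<in> {t\<in>{1..n}. t \<le> p \<and> x t \<le> k}" "y = tau i z" by auto
    then show "y \<in> {t\<in>{1..n}. t \<le> p \<and> (x \<circ> tau i) t \<le> k}"
      using assms by (cases "z = i"; cases "z = Suc i") auto
  qed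
  then show ?thesis
    unfolding bruhat_rank_def by (simp add: card_image inj_on_subset[OF inj_tau])
qed

lemma bruhat_rank_comp_tau_at:
  assumes "1 \<le> i" "i < n"
  shows "bruhat_rank n (x \<circ> tau i) i k =
    bruhat_rank n x (i - 1) k + (if x (Suc i) \<le> k then 1 else 0)"
  using bruhat_rank_step[of i n "x \<circ> tau i" k] bruhat_rank_comp_tau_other[of i n "i - 1" x k] assms
  by simp

lemma bruhat_rank_at:
  assumes "1 \<le> i" "i < n"
  shows "bruhat_rank n x i k = bruhat_rank n x (i - 1) k + (if x i \<le> k then 1 else 0)"
  using bruhat_rank_step[of i n x k] assms by simp

lemma bruhat_rank_at_Suc:
  assumes "1 \<le> i" "i < n"
  shows "bruhat_rank n x (Suc i) k = bruhat_rank n x (i - 1) k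
    + (if x i \<le> k then 1 else 0) + (if x (Suc i) \<le> k then 1 else 0)"
  using bruhat_rank_step[of "Suc i" n x k] bruhat_rank_step[of i n x k] assms by simp

lemma rank_le_rowI:
  assumes "1 \<le> i" "i < n"
    and "\<And>p k. p \<noteq> i \<Longrightarrow> bruhat_rank n v p k \<le> bruhat_rank n u p k"
    and "\<And>k. bruhat_rank n v i k \<le> bruhat_rank n u i k"
  shows "rank_le n u v"
  unfolding rank_le_def using assms by metis

lemma rank_le_ascent:
  assumes "1 \<le> i" "i < n" "x i < x (Suc i)"
  shows "rank_le n x (x \<circ> tau i)"
proof (rule rank_le_rowI[OF assms(1,2)])
  fix p k assume "p \<noteq> i"
  then show "bruhat_rank n (x \<circ> tau i) p k \<le> bruhat_rank n x p k"
    using bruhat_rank_comp_tau_other assms by simp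
next
  fix k show "bruhat_rank n (x \<circ> tau i) i k \<le> bruhat_rank n x i k"
    using bruhat_rank_comp_tau_at[OF assms(1,2)] bruhat_rank_at[OF assms(1,2)] assms(3) by simp
qed

text \<open>The four cases of the lifting property for right multiplication by \<open>tau i\<close>.\<close>

lemma rank_le_lift_ascent:
  assumes "1 \<le> i" "i < n" "rank_le n u v" "v i < v (Suc i)"
  shows "rank_le n (u \<circ> tau i) (v \<circ> tau i)"
proof (rule rank_le_rowI[OF assms(1,2)])
  fix p k assume "p \<noteq> i"
  then show "bruhat_rank n (v \<circ> tau i) p k \<le> bruhat_rank n (u \<circ> tau i) p k"
    using bruhat_rank_comp_tau_other assms rank_le_def by simp
next
  fix k
  have "bruhat_rank n v (i - 1) k \<le> bruhat_rank n u (i - 1) k"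
    "bruhat_rank n v i k \<le> bruhat_rank n u i k"
    "bruhat_rank n v (Suc i) k \<le> bruhat_rank n u (Suc i) k"
    using assms(3) rank_le_def by auto
  then show "bruhat_rank n (v \<circ> tau i) i k \<le> bruhat_rank n (u \<circ> tau i) i k"
    using bruhat_rank_comp_tau_at[OF assms(1,2)] bruhat_rank_at[OF assms(1,2)]
      bruhat_rank_at_Suc[OF assms(1,2)] assms(4)
    by (simp split: if_splits)
qed

lemma rank_le_lower_descent:
  assumes "1 \<le> i" "i < n" "rank_le n u v" "v (Suc i) < v i" "u i < u (Suc i)"
  shows "rank_le n u (v \<circ> tau i)"
proof (rule rank_le_rowI[OF assms(1,2)])
  fix p k assume "p \<noteq> i"
  then show "bruhat_rank n (v \<circ> tau i) p k \<le> bruhat_rank n u p k"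
    using bruhat_rank_comp_tau_other assms rank_le_def by simp
next
  fix k
  have "bruhat_rank n v (i - 1) k \<le> bruhat_rank n u (i - 1) k"
    "bruhat_rank n v i k \<le> bruhat_rank n u i k"
    "bruhat_rank n v (Suc i) k \<le> bruhat_rank n u (Suc i) k"
    using assms(3) rank_le_def by auto
  then show "bruhat_rank n (v \<circ> tau i) i k \<le> bruhat_rank n u i k"
    using bruhat_rank_comp_tau_at[OF assms(1,2)] bruhat_rank_at[OF assms(1,2)]
      bruhat_rank_at_Suc[OF assms(1,2)] assms(4,5)
    by (simp split: if_splits)
qed

lemma rank_le_lift_descents:
  assumes "1 \<le> i" "i < n" "rank_le n u v" "v (Suc i) < v i" "u (Suc i) < u i"
  shows "rank_le n (u \<circ> tau i) (v \<circ> tau i)"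
proof -
  have "rank_le n (u \<circ> tau i) u"
    using rank_le_ascent[OF assms(1,2), of "u \<circ> tau i"] assms(5) by simp
  then have "rank_le n (u \<circ> tau i) v" using assms(3) rank_le_trans by blast
  then show ?thesis using rank_le_lower_descent[OF assms(1,2) _ assms(4)] assms(5) by simp
qed

lemma rank_le_raise_ascent:
  assumes "1 \<le> i" "i < n" "rank_le n u v" "u i < u (Suc i)" "v (Suc i) < v i"
  shows "rank_le n (u \<circ> tau i) v"
proof -
  have "rank_le n u (v \<circ> tau i)" using rank_le_lower_descent assms by blast
  then show ?thesis using rank_le_lift_ascent[OF assms(1,2), of u "v \<circ> tau i"] assms(5) by simp
qed

definition inversions :: "nat \<Rightarrow> (nat \<Rightarrow> nat) \<Rightarrow> (nat \<times> nat) set" where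
  "inversions n x = {(a, b). a \<in> {1..n} \<and> b \<in> {1..n} \<and> a < b \<and> x b < x a}"

definition perm_length :: "nat \<Rightarrow> (nat \<Rightarrow> nat) \<Rightarrow> nat" where
  "perm_length n x = card (inversions n x)"

lemma finite_inversions: "finite (inversions n x)"
  by (rule finite_subset[of _ "{1..n} \<times> {1..n}"]) (auto simp: inversions_def)

lemma perm_length_id: "perm_length n id = 0"
proof -
  have "inversions n id = {}" by (auto simp: inversions_def)
  then show ?thesis by (simp add: perm_length_def)
qed

lemma perm_length_descent:
  assumes "1 \<le> i" "i < n" "x (Suc i) < x i"
  shows "perm_length n (x \<circ> tau i) + 1 = perm_length n x"
proof -
  define g where "g = (\<lambda>(a, b). (tau i a, tau i b))"
  have "inj g"
  proof (rule injI)
    fix p q assume "g p = g q"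
    then have "tau i (fst p) = tau i (fst q)" "tau i (snd p) = tau i (snd q)"
      by (auto simp: g_def split: prod.splits)
    then show "p = q" by (metis tau_tau prod_eq_iff)
  qed
  have mem: "(i, Suc i) \<in> inversions n x" using assms by (auto simp: inversions_def)
  have eq: "inversions n (x \<circ> tau i) = g ` (inversions n x - {(i, Suc i)})"
  proof (rule set_eqI, rule iffI)
    fix ab assume ab: "ab \<in> inversions n (x \<circ> tau i)"
    obtain a b where abd: "ab = (a, b)" by fastforce
    from ab abd have a: "a \<in> {1..n}" "b \<in> {1..n}" "a < b" "x (tau i b) < x (tau i a)"
      by (auto simp: inversions_def)
    have ne: "(a, b) \<noteq> (i, Suc i)" using a(4) assms(3) by auto
    have ne2: "(tau i a, tau i b) \<noteq> (i, Suc i)"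
    proof
      assume "(tau i a, tau i b) = (i, Suc i)"
      then have "tau i (tau i a) = tau i i" "tau i (tau i b) = tau i (Suc i)" by auto
      then show False using a(3) by simp
    qed
    have "(tau i a, tau i b) \<in> inversions n x - {(i, Suc i)}"
      unfolding inversions_def using a tau_less_tau[OF a(3) ne] tau_in_atLeastAtMost[OF assms(1,2)] ne2
      by auto
    moreover have "ab = g (tau i a, tau i b)" using abd by (simp add: g_def)
    ultimately show "ab \<in> g ` (inversions n x - {(i, Suc i)})" by blast
  next
    fix ab assume "ab \<in> g ` (inversions n x - {(i, Suc i)})"
    then obtain a b where ab: "(a, b) \<in> inversions n x" "(a, b) \<noteq> (i, Suc i)" "ab = (tau i a, tau i b)"
      by (auto simp: g_def)
    then show "ab \<in> inversions n (x \<circ> tau i)"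
      using tau_less_tau[OF _ ab(2)] tau_in_atLeastAtMost[OF assms(1,2)] by (auto simp: inversions_def)
  qed
  have "perm_length n (x \<circ> tau i) = card (inversions n x - {(i, Suc i)})"
    unfolding perm_length_def eq by (rule card_image) (rule inj_on_subset[OF \<open>inj g\<close>], simp)
  also have "\<dots> = perm_length n x - 1"
    using mem finite_inversions by (simp add: perm_length_def)
  finally have "perm_length n (x \<circ> tau i) = perm_length n x - 1" .
  moreover have "perm_length n x > 0"
    using mem finite_inversions[of n x] by (auto simp: perm_length_def card_gt_0_iff)
  ultimately show ?thesis by simp
qed

lemma perm_length_ascent:
  assumes "1 \<le> i" "i < n" "x i < x (Suc i)"
  shows "perm_length n (x \<circ> tau i) = perm_length n x + 1"
  using perm_length_descent[OF assms(1,2), of "x \<circ> tau i"] assms(3) by simp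

lemma perm_length_comp_tau_le:
  assumes "x \<in> Sym n" "1 \<le> i" "i < n"
  shows "perm_length n (x \<circ> tau i) \<le> perm_length n x + 1"
  using perm_length_descent[OF assms(2,3), of x] perm_length_ascent[OF assms(2,3), of x]
    Sym_apply_Suc_neq[OF assms(1), of i]
  by (cases "x i < x (Suc i)") auto

lemma perm_length_word_prod_le: "set w \<subseteq> {1..<n} \<Longrightarrow> perm_length n (word_prod w) \<le> length w"
proof (induction w rule: rev_induct)
  case (snoc a w)
  have w: "set w \<subseteq> {1..<n}" and a: "1 \<le> a" "a < n" using snoc.prems by auto
  have "perm_length n (word_prod (w @ [a])) \<le> perm_length n (word_prod w) + 1"
    unfolding word_prod_snoc by (rule perm_length_comp_tau_le[OF word_prod_in_Sym[OF w] a])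
  then show ?case using snoc.IH[OF w] by simp
qed (simp add: perm_length_id)

lemma exists_word_of_perm_length:
  "x \<in> Sym n \<Longrightarrow> \<exists>w. set w \<subseteq> {1..<n} \<and> word_prod w = x \<and> length w = perm_length n x"
proof (induction "perm_length n x" arbitrary: x rule: less_induct)
  case less
  show ?case
  proof (cases "\<exists>i. 1 \<le> i \<and> i < n \<and> x (Suc i) < x i")
    case True
    then obtain i where i: "1 \<le> i" "i < n" "x (Suc i) < x i" by blast
    have d: "perm_length n (x \<circ> tau i) + 1 = perm_length n x" using perm_length_descent[OF i] .
    obtain w where w: "set w \<subseteq> {1..<n}" "word_prod w = x \<circ> tau i" "length w = perm_length n (x \<circ> tau i)"
      using less.hyps[OF _ Sym_comp_tau[OF less.prems i(1,2)]] d by force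
    show ?thesis
      by (rule exI[of _ "w @ [i]"]) (use w i d in \<open>auto simp: word_prod_snoc\<close>)
  next
    case False
    then have "x = id"
      using Sym_ascending_eq_id[OF less.prems] Sym_apply_Suc_neq[OF less.prems] by (meson linorder_neqE_nat)
    then show ?thesis by (intro exI[of _ "[]"]) (simp add: perm_length_id)
  qed
qed

lemma reduced_word_length:
  assumes "reduced_word n w v"
  shows "v \<in> Sym n" "length w = perm_length n v"
proof -
  have w: "set w \<subseteq> {1..<n}" "word_prod w = v"
    using assms by (auto simp: reduced_word_def is_word_def)
  then show v: "v \<in> Sym n" using word_prod_in_Sym by blast
  obtain w' where "set w' \<subseteq> {1..<n}" "word_prod w' = v" "length w' = perm_length n v"
    using exists_word_of_perm_length[OF v] by blast
  then have "length w \<le> perm_length n v" using assms by (auto simp: reduced_word_def is_word_def)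
  moreover have "perm_length n v \<le> length w" using perm_length_word_prod_le[OF w(1)] w(2) by simp
  ultimately show "length w = perm_length n v" by simp
qed

lemma reduced_wordI:
  assumes "set w \<subseteq> {1..<n}" "word_prod w = v" "length w = perm_length n v"
  shows "reduced_word n w v"
  unfolding reduced_word_def is_word_def using assms perm_length_word_prod_le by fastforce

lemma reduced_word_snoc:
  assumes "reduced_word n w (v \<circ> tau i)" "1 \<le> i" "i < n" "v (Suc i) < v i"
  shows "reduced_word n (w @ [i]) v"
  using reduced_word_length[OF assms(1)] assms perm_length_descent[OF assms(2-4)]
  by (intro reduced_wordI) (auto simp: reduced_word_def is_word_def word_prod_snoc)

lemma perm_length_mono:
  assumes "bruhat_le n x v" shows "perm_length n x \<le> perm_length n v"
proof -
  obtain w w' where w: "reduced_word n w v" "subseq w' w" "word_prod w' = x"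
    using assms unfolding bruhat_le_def by blast
  have "set w' \<subseteq> {1..<n}"
    using w(1,2) by (auto simp: reduced_word_def is_word_def dest: list_emb_set)
  then have "perm_length n x \<le> length w'" using perm_length_word_prod_le w(3) by blast
  also have "\<dots> \<le> length w" using w(2) by (rule list_emb_length)
  finally show ?thesis using reduced_word_length(2)[OF w(1)] by simp
qed

lemma rank_le_id: assumes "u \<in> Sym n" "rank_le n u id" shows "u = id"
proof (rule Sym_below_id[OF assms(1)], rule ballI)
  fix t assume t: "t \<in> {1..n}"
  let ?S = "{s\<in>{1..n}. s \<le> t \<and> u s \<le> t}"
  have "{s\<in>{1..n}. s \<le> t \<and> id s \<le> t} = {1..t}" using t by auto
  then have "bruhat_rank n id t t = card {1..t}" unfolding bruhat_rank_def by simp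
  moreover have "bruhat_rank n id t t \<le> bruhat_rank n u t t"
    using assms(2) unfolding rank_le_def by blast
  ultimately have "card {1..t} \<le> card ?S" unfolding bruhat_rank_def by simp
  then have "?S = {1..t}" by (intro card_seteq) auto
  with t have "t \<in> ?S" by simp
  then show "u t \<le> t" by simp
qed

lemma rank_le_subword:
  "set w \<subseteq> {1..<n} \<Longrightarrow> perm_length n (word_prod w) = length w \<Longrightarrow> subseq w' w
    \<Longrightarrow> rank_le n (word_prod w') (word_prod w)"
proof (induction w arbitrary: w' rule: rev_induct)
  case Nil
  then have "w' = []" by simp
  then show ?case by (simp add: rank_le_refl)
next
  case (snoc a w)
  define x where "x = word_prod w"
  have ws: "set w \<subseteq> {1..<n}" and a: "1 \<le> a" "a < n" using snoc.prems by auto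
  have x: "x \<in> Sym n" using word_prod_in_Sym[OF ws] x_def by simp
  have le: "perm_length n x \<le> length w" using perm_length_word_prod_le[OF ws] x_def by simp
  have e: "perm_length n (x \<circ> tau a) = length w + 1"
    using snoc.prems(2) by (simp add: word_prod_snoc x_def comp_def)
  have asc: "x a < x (Suc a)"
  proof (rule ccontr)
    assume "\<not> x a < x (Suc a)"
    then have "x (Suc a) < x a" using Sym_apply_Suc_neq[OF x, of a] by simp
    then show False using perm_length_descent[OF a, of x] e le by simp
  qed
  have "perm_length n x = length w" using perm_length_ascent[OF a asc] e by simp
  obtain w1 w2 where w': "w' = w1 @ w2" "subseq w1 w" "subseq w2 [a]"
    using snoc.prems(3) by (auto elim: subseq_appendE)
  have IH: "rank_le n (word_prod w1) x"
    using snoc.IH[OF ws _ w'(2)] \<open>perm_length n x = length w\<close> x_def by simp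
  have "w2 = [] \<or> w2 = [a]"
    using w'(3) by (cases w2) (auto split: if_splits dest: list_emb_Nil2)
  then show ?case
  proof
    assume "w2 = []"
    then show ?thesis
      using rank_le_trans[OF IH rank_le_ascent[OF a asc]] by (simp only: w'(1) word_prod_snoc x_def append_Nil2)
  next
    assume "w2 = [a]"
    then show ?thesis
      using rank_le_lift_ascent[OF a IH asc] by (simp only: w'(1) word_prod_snoc x_def)
  qed
qed

lemma exists_reduced_subword:
  "u \<in> Sym n \<Longrightarrow> v \<in> Sym n \<Longrightarrow> rank_le n u v \<Longrightarrow>
    \<exists>w. reduced_word n w v \<and> (\<exists>w'. subseq w' w \<and> word_prod w' = u)"
proof (induction "perm_length n v" arbitrary: u v rule: less_induct)
  case less
  show ?case
  proof (cases "\<exists>i. 1 \<le> i \<and> i < n \<and> v (Suc i) < v i")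
    case True
    then obtain i where i: "1 \<le> i" "i < n" "v (Suc i) < v i" by blast
    have v': "v \<circ> tau i \<in> Sym n" using Sym_comp_tau less.prems i by blast
    have shorter: "perm_length n (v \<circ> tau i) < perm_length n v"
      using perm_length_descent[OF i] by simp
    show ?thesis
    proof (cases "u (Suc i) < u i")
      case True
      have "rank_le n (u \<circ> tau i) (v \<circ> tau i)"
        using rank_le_lift_descents[OF i(1,2) less.prems(3) i(3) True] .
      then obtain w w' where w: "reduced_word n w (v \<circ> tau i)" "subseq w' w" "word_prod w' = u \<circ> tau i"
        using less.hyps[OF shorter Sym_comp_tau[OF less.prems(1) i(1,2)] v'] by blast
      have "subseq (w' @ [i]) (w @ [i])" "word_prod (w' @ [i]) = u"
        using w by (auto simp: word_prod_snoc)
      then show ?thesis using reduced_word_snoc[OF w(1) i] by blast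
    next
      case False
      then have "u i < u (Suc i)" using Sym_apply_Suc_neq[OF less.prems(1), of i] by simp
      then have "rank_le n u (v \<circ> tau i)"
        using rank_le_lower_descent[OF i(1,2) less.prems(3) i(3)] by blast
      then obtain w w' where w: "reduced_word n w (v \<circ> tau i)" "subseq w' w" "word_prod w' = u"
        using less.hyps[OF shorter less.prems(1) v'] by blast
      have "subseq w' (w @ [i])" using w(2) by (rule subseq_rev_drop_many)
      then show ?thesis using reduced_word_snoc[OF w(1) i] w(3) by blast
    qed
  next
    case False
    then have "v = id"
      using Sym_ascending_eq_id[OF less.prems(2)] Sym_apply_Suc_neq[OF less.prems(2)]
      by (meson linorder_neqE_nat)
    moreover have "u = id" using rank_le_id less.prems \<open>v = id\<close> by simp
    moreover have "reduced_word n [] id" by (rule reduced_wordI) (auto simp: perm_length_id)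
    ultimately show ?thesis by (intro exI[of _ "[]"]) auto
  qed
qed

theorem bruhat_le_iff_rank_le: "bruhat_le n u v \<longleftrightarrow> u \<in> Sym n \<and> v \<in> Sym n \<and> rank_le n u v"
proof
  assume "bruhat_le n u v"
  then obtain w w' where w: "reduced_word n w v" "subseq w' w" "word_prod w' = u"
    unfolding bruhat_le_def by blast
  have ws: "set w \<subseteq> {1..<n}" "word_prod w = v"
    using w(1) by (auto simp: reduced_word_def is_word_def)
  have "set w' \<subseteq> {1..<n}" using ws(1) w(2) by (auto dest: list_emb_set)
  then have "u \<in> Sym n" using word_prod_in_Sym w(3) by blast
  moreover have "rank_le n u v"
    using rank_le_subword[OF ws(1) _ w(2)] reduced_word_length[OF w(1)] ws(2) w(3) by simp
  ultimately show "u \<in> Sym n \<and> v \<in> Sym n \<and> rank_le n u v"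
    using reduced_word_length(1)[OF w(1)] by blast
next
  assume "u \<in> Sym n \<and> v \<in> Sym n \<and> rank_le n u v"
  then show "bruhat_le n u v" unfolding bruhat_le_def using exists_reduced_subword by blast
qed

lemma mem_bruhat_interval:
  "x \<in> bruhat_interval n u v \<longleftrightarrow>
    x \<in> Sym n \<and> u \<in> Sym n \<and> v \<in> Sym n \<and> rank_le n u x \<and> rank_le n x v"
  unfolding bruhat_interval_def bruhat_le_iff_rank_le by auto

section \<open>Symmetries of the Bruhat order\<close>

lemma card_value_le_inv:
  assumes "y \<in> Sym n"
  shows "card {t\<in>{1..n}. P t \<and> y t \<le> k} = card {m\<in>{1..n}. m \<le> k \<and> P (inv y m)}"
proof -
  have "{m\<in>{1..n}. m \<le> k \<and> P (inv y m)} = y ` {t\<in>{1..n}. P t \<and> y t \<le> k}"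
  proof (rule set_eqI, rule iffI)
    fix m assume m: "m \<in> {m\<in>{1..n}. m \<le> k \<and> P (inv y m)}"
    then have "inv y m \<in> {t\<in>{1..n}. P t \<and> y t \<le> k}"
      using Sym_apply_in[OF Sym_inv[OF assms]] assms by auto
    moreover have "m = y (inv y m)" using assms by simp
    ultimately show "m \<in> y ` {t\<in>{1..n}. P t \<and> y t \<le> k}" by blast
  next
    fix m assume "m \<in> y ` {t\<in>{1..n}. P t \<and> y t \<le> k}"
    then obtain t where "t \<in> {1..n}" "P t" "y t \<le> k" "m = y t" by auto
    then show "m \<in> {m\<in>{1..n}. m \<le> k \<and> P (inv y m)}" using Sym_apply_in assms by auto
  qed
  moreover have "inj_on y {t\<in>{1..n}. P t \<and> y t \<le> k}"
    using Sym_inj[OF assms] inj_on_subset by blast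
  ultimately show ?thesis by (simp add: card_image)
qed

lemma bruhat_rank_inv: "x \<in> Sym n \<Longrightarrow> bruhat_rank n (inv x) p k = bruhat_rank n x k p"
  unfolding bruhat_rank_def using card_value_le_inv[of x n "\<lambda>t. t \<le> k" p] by simp

lemma rank_le_inv: "u \<in> Sym n \<Longrightarrow> v \<in> Sym n \<Longrightarrow> rank_le n u v \<Longrightarrow> rank_le n (inv u) (inv v)"
  unfolding rank_le_def by (simp add: bruhat_rank_inv)

lemma bruhat_le_inv: "bruhat_le n u v \<Longrightarrow> bruhat_le n (inv u) (inv v)"
  unfolding bruhat_le_iff_rank_le by (simp add: Sym_inv rank_le_inv)

lemma image_inv_bruhat_interval:
  assumes "u \<in> Sym n" "v \<in> Sym n"
  shows "inv ` bruhat_interval n u v = bruhat_interval n (inv u) (inv v)"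
proof
  show "inv ` bruhat_interval n u v \<subseteq> bruhat_interval n (inv u) (inv v)"
    by (auto simp: mem_bruhat_interval Sym_inv rank_le_inv)
next
  show "bruhat_interval n (inv u) (inv v) \<subseteq> inv ` bruhat_interval n u v"
  proof
    fix y assume y: "y \<in> bruhat_interval n (inv u) (inv v)"
    then have "inv y \<in> bruhat_interval n u v"
      using rank_le_inv[of _ n] assms Sym_inv by (fastforce simp: mem_bruhat_interval)
    moreover have "y = inv (inv y)" using y Sym_inv_inv by (auto simp: mem_bruhat_interval)
    ultimately show "y \<in> inv ` bruhat_interval n u v" by blast
  qed
qed

definition w0 :: "nat \<Rightarrow> nat \<Rightarrow> nat" where
  "w0 n t = (if t \<in> {1..n} then n + 1 - t else t)"

lemma w0_w0 [simp]: "w0 n (w0 n t) = t"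
  unfolding w0_def by auto

lemma comp_w0_w0 [simp]: "f \<circ> w0 n \<circ> w0 n = f"
  by (simp add: fun_eq_iff)

lemma w0_in_Sym: "w0 n \<in> Sym n"
  unfolding mem_Sym_iff
proof (rule inj_imp_permutes)
  show "inj_on (w0 n) {1..n}" by (rule inj_on_inverseI[where g = "w0 n"]) simp
qed (auto simp: w0_def)

lemma inv_w0: "inv (w0 n) = w0 n"
  by (rule inv_unique_comp) (simp_all add: fun_eq_iff)

lemma bruhat_rank_full:
  assumes "x \<in> Sym n" "n \<le> p"
  shows "bruhat_rank n x p k = card {m\<in>{1..n}. m \<le> k}"
proof -
  have "bruhat_rank n x p k = card {t\<in>{1..n}. True \<and> x t \<le> k}"
    unfolding bruhat_rank_def using assms(2) by (intro arg_cong[where f = card]) auto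
  also have "\<dots> = card {m\<in>{1..n}. m \<le> k}"
    using card_value_le_inv[OF assms(1), of "\<lambda>t. True" k] by simp
  finally show ?thesis .
qed

lemma bruhat_rank_comp_w0:
  "p \<le> n \<Longrightarrow> bruhat_rank n (x \<circ> w0 n) p k + bruhat_rank n x (n - p) k = bruhat_rank n x n k"
proof (induction p)
  case (Suc p)
  have "w0 n (Suc p) = n - p" using Suc.prems by (simp add: w0_def)
  then have "bruhat_rank n (x \<circ> w0 n) (Suc p) k =
      bruhat_rank n (x \<circ> w0 n) p k + (if x (n - p) \<le> k then 1 else 0)"
    using bruhat_rank_step[of "Suc p" n "x \<circ> w0 n" k] Suc.prems by simp
  moreover have "bruhat_rank n x (n - p) k =
      bruhat_rank n x (n - Suc p) k + (if x (n - p) \<le> k then 1 else 0)"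
    using bruhat_rank_step[of "n - p" n x k] Suc.prems by simp
  moreover have "bruhat_rank n (x \<circ> w0 n) p k + bruhat_rank n x (n - p) k = bruhat_rank n x n k"
    using Suc by (simp add: comp_def)
  ultimately show ?case by linarith
qed simp

lemma rank_le_comp_w0:
  assumes "u \<in> Sym n" "v \<in> Sym n" "rank_le n u v"
  shows "rank_le n (v \<circ> w0 n) (u \<circ> w0 n)"
  unfolding rank_le_def
proof (intro allI)
  fix p k
  show "bruhat_rank n (u \<circ> w0 n) p k \<le> bruhat_rank n (v \<circ> w0 n) p k"
  proof (cases "p \<le> n")
    case True
    have "bruhat_rank n v (n - p) k \<le> bruhat_rank n u (n - p) k"
      using assms(3) rank_le_def by blast
    moreover have "bruhat_rank n u n k = bruhat_rank n v n k"
      using bruhat_rank_full assms by simp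
    ultimately show ?thesis
      using bruhat_rank_comp_w0[OF True, of u k] bruhat_rank_comp_w0[OF True, of v k] by linarith
  next
    case False
    then show ?thesis
      using bruhat_rank_full[of "u \<circ> w0 n" n p k] bruhat_rank_full[of "v \<circ> w0 n" n p k]
        Sym_comp[OF assms(1) w0_in_Sym] Sym_comp[OF assms(2) w0_in_Sym] by simp
  qed
qed

definition twist :: "nat \<Rightarrow> (nat \<Rightarrow> nat) \<Rightarrow> nat \<Rightarrow> nat" where
  "twist n x = inv x \<circ> w0 n"

lemma twist_in_Sym: "x \<in> Sym n \<Longrightarrow> twist n x \<in> Sym n"
  unfolding twist_def by (intro Sym_comp Sym_inv w0_in_Sym)

lemma twist_rank_le_iff:
  assumes "u \<in> Sym n" "v \<in> Sym n"
  shows "rank_le n (twist n v) (twist n u) \<longleftrightarrow> rank_le n u v"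
proof
  assume "rank_le n (twist n v) (twist n u)"
  then have "rank_le n (twist n u \<circ> w0 n) (twist n v \<circ> w0 n)"
    by (intro rank_le_comp_w0 twist_in_Sym assms)
  then have "rank_le n (inv u) (inv v)" by (simp add: twist_def)
  then show "rank_le n u v"
    using rank_le_inv[OF Sym_inv[OF assms(1)] Sym_inv[OF assms(2)]] assms by simp
next
  assume "rank_le n u v"
  then show "rank_le n (twist n v) (twist n u)"
    unfolding twist_def by (intro rank_le_comp_w0 Sym_inv rank_le_inv assms)
qed

lemma twist_inv_comp_w0:
  assumes "y \<in> Sym n"
  shows "inv (y \<circ> w0 n) \<in> Sym n" "twist n (inv (y \<circ> w0 n)) = y"
proof -
  have "y \<circ> w0 n \<in> Sym n" using Sym_comp[OF assms w0_in_Sym] .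
  then show "inv (y \<circ> w0 n) \<in> Sym n" "twist n (inv (y \<circ> w0 n)) = y"
    by (simp_all add: Sym_inv twist_def)
qed

lemma inv_twist: assumes "x \<in> Sym n" shows "inv (twist n x) = w0 n \<circ> x"
proof -
  have "inv (twist n x) = inv (w0 n) \<circ> inv (inv x)"
    unfolding twist_def by (rule o_inv_distrib[OF Sym_bij[OF Sym_inv[OF assms]] Sym_bij[OF w0_in_Sym]])
  then show ?thesis using assms inv_w0 by simp
qed

lemma image_twist_bruhat_interval:
  assumes "u \<in> Sym n" "v \<in> Sym n"
  shows "twist n ` bruhat_interval n u v = bruhat_interval n (twist n v) (twist n u)"
proof
  show "twist n ` bruhat_interval n u v \<subseteq> bruhat_interval n (twist n v) (twist n u)"
    by (auto simp: mem_bruhat_interval twist_in_Sym twist_rank_le_iff)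
next
  show "bruhat_interval n (twist n v) (twist n u) \<subseteq> twist n ` bruhat_interval n u v"
  proof
    fix y assume y: "y \<in> bruhat_interval n (twist n v) (twist n u)"
    define x where "x = inv (y \<circ> w0 n)"
    have x: "x \<in> Sym n" "twist n x = y"
      using twist_inv_comp_w0 y x_def by (auto simp: mem_bruhat_interval)
    then have "x \<in> bruhat_interval n u v"
      using y assms twist_rank_le_iff by (auto simp: mem_bruhat_interval)
    then show "y \<in> twist n ` bruhat_interval n u v" using x(2) by blast
  qed
qed

section \<open>Minimal coset representatives\<close>

text \<open>\<open>\<beta>\<close> labels the positions \<open>1..n\<close> by blocks (intervals, when \<open>\<beta>\<close> is monotone); the
  permutations ascending on blocks are the minimal representatives of the cosets \<open>v W\<^sub>J\<close> of the
  Young subgroup \<open>W\<^sub>J\<close> permuting positions inside the blocks.\<close>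

definition ascending_on_blocks :: "nat \<Rightarrow> (nat \<Rightarrow> 'a) \<Rightarrow> (nat \<Rightarrow> nat) \<Rightarrow> bool" where
  "ascending_on_blocks n \<beta> v \<longleftrightarrow> (\<forall>i. 1 \<le> i \<longrightarrow> i < n \<longrightarrow> \<beta> i = \<beta> (Suc i) \<longrightarrow> v i < v (Suc i))"

lemma ascending_on_blocksD:
  fixes \<beta> :: "nat \<Rightarrow> 'a::order"
  assumes "mono \<beta>" "ascending_on_blocks n \<beta> v"
  shows "1 \<le> a \<Longrightarrow> a < b \<Longrightarrow> b \<le> n \<Longrightarrow> \<beta> a = \<beta> b \<Longrightarrow> v a < v b"
proof (induction b)
  case (Suc b)
  show ?case
  proof (cases "a = b")
    case True
    then show ?thesis using assms(2) Suc.prems by (auto simp: ascending_on_blocks_def)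
  next
    case False
    then have "a < b" using Suc.prems by simp
    then have "\<beta> a \<le> \<beta> b" "\<beta> b \<le> \<beta> (Suc b)" using monoD[OF assms(1)] by auto
    then have "\<beta> b = \<beta> a" "\<beta> b = \<beta> (Suc b)" using Suc.prems by auto
    then have "v a < v b" "v b < v (Suc b)"
      using Suc \<open>a < b\<close> assms(2) by (auto simp: ascending_on_blocks_def)
    then show ?thesis by simp
  qed
qed simp

lemma image_eq_modulo_tau:
  assumes "\<And>x. x \<in> A \<union> B \<Longrightarrow> f (x \<circ> tau i) = f x"
    and "\<And>x. x \<in> A \<Longrightarrow> x \<in> B \<or> x \<circ> tau i \<in> B"
    and "\<And>x. x \<in> B \<Longrightarrow> x \<in> A \<or> x \<circ> tau i \<in> A"
  shows "f ` A = f ` B"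
proof -
  have sub: "f ` X \<subseteq> f ` Y"
    if "\<And>x. x \<in> X \<Longrightarrow> (x \<in> Y \<or> x \<circ> tau i \<in> Y) \<and> f (x \<circ> tau i) = f x" for X Y
  proof
    fix z assume "z \<in> f ` X"
    then obtain x where "x \<in> X" "z = f x" by blast
    with that[of x] show "z \<in> f ` Y" by (metis image_eqI)
  qed
  show ?thesis using assms by (intro subset_antisym sub) auto
qed

lemma image_bruhat_interval_drop_descent:
  assumes i: "1 \<le> i" "i < n" and invariant: "\<And>x. x \<in> Sym n \<Longrightarrow> f (x \<circ> tau i) = f x"
    and "u \<in> Sym n" "v \<in> Sym n" "v (Suc i) < v i" "u i < u (Suc i)"
  shows "f ` bruhat_interval n u (v \<circ> tau i) = f ` bruhat_interval n u v"
proof (rule image_eq_modulo_tau[where i = i])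
  have v': "v \<circ> tau i \<in> Sym n" "rank_le n (v \<circ> tau i) v"
    using Sym_comp_tau[OF assms(5) i] rank_le_ascent[OF i, of "v \<circ> tau i"] assms(6) by simp_all
  fix x
  show "x \<in> bruhat_interval n u (v \<circ> tau i) \<Longrightarrow>
      x \<in> bruhat_interval n u v \<or> x \<circ> tau i \<in> bruhat_interval n u v"
    using v' rank_le_trans assms(4,5) by (auto simp: mem_bruhat_interval)
  assume x: "x \<in> bruhat_interval n u v"
  then have "x \<in> Sym n" "rank_le n u x" "rank_le n x v" by (simp_all add: mem_bruhat_interval)
  show "x \<in> bruhat_interval n u (v \<circ> tau i) \<or> x \<circ> tau i \<in> bruhat_interval n u (v \<circ> tau i)"
  proof (cases "x i < x (Suc i)")
    case True
    then show ?thesis using x rank_le_lower_descent[OF i \<open>rank_le n x v\<close> assms(6) True] v'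
      by (simp add: mem_bruhat_interval)
  next
    case False
    then have "x (Suc i) < x i" using Sym_apply_Suc_neq[OF \<open>x \<in> Sym n\<close>, of i] by simp
    then show ?thesis
      using x v' Sym_comp_tau[OF \<open>x \<in> Sym n\<close> i] rank_le_lift_descents[OF i \<open>rank_le n x v\<close> assms(6)]
        rank_le_lower_descent[OF i \<open>rank_le n u x\<close> _ assms(7)]
      by (simp add: mem_bruhat_interval)
  qed
qed (use invariant in \<open>auto simp: mem_bruhat_interval\<close>)


lemma image_bruhat_interval_drop_common_descent:
  assumes i: "1 \<le> i" "i < n" and invariant: "\<And>x. x \<in> Sym n \<Longrightarrow> f (x \<circ> tau i) = f x"
    and "u \<in> Sym n" "v \<in> Sym n" "v (Suc i) < v i" "u (Suc i) < u i"
  shows "f ` bruhat_interval n (u \<circ> tau i) (v \<circ> tau i) = f ` bruhat_interval n u v"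
proof (rule image_eq_modulo_tau[where i = i])
  have u': "u \<circ> tau i \<in> Sym n" "rank_le n (u \<circ> tau i) u" "(u \<circ> tau i) i < (u \<circ> tau i) (Suc i)"
    using Sym_comp_tau[OF assms(4) i] rank_le_ascent[OF i, of "u \<circ> tau i"] assms(7) by simp_all
  have v': "v \<circ> tau i \<in> Sym n" "rank_le n (v \<circ> tau i) v" "(v \<circ> tau i) i < (v \<circ> tau i) (Suc i)"
    using Sym_comp_tau[OF assms(5) i] rank_le_ascent[OF i, of "v \<circ> tau i"] assms(6) by simp_all
  fix x
  show "x \<in> bruhat_interval n (u \<circ> tau i) (v \<circ> tau i) \<Longrightarrow>
      x \<in> bruhat_interval n u v \<or> x \<circ> tau i \<in> bruhat_interval n u v"
  proof -
    assume "x \<in> bruhat_interval n (u \<circ> tau i) (v \<circ> tau i)"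
    then have x: "x \<in> Sym n" "rank_le n (u \<circ> tau i) x" "rank_le n x (v \<circ> tau i)"
      by (simp_all add: mem_bruhat_interval)
    show ?thesis
    proof (cases "x i < x (Suc i)")
      case True
      then show ?thesis
        using x Sym_comp_tau[OF x(1) i] assms(4,5)
          rank_le_lift_ascent[of i n x "v \<circ> tau i", OF i x(3) v'(3)] rank_le_lift_ascent[OF i x(2) True]
        by (simp add: mem_bruhat_interval)
    next
      case False
      then have "x (Suc i) < x i" using Sym_apply_Suc_neq[OF x(1), of i] by simp
      then show ?thesis
        using x assms(4,5) rank_le_trans[OF x(3) v'(2)] rank_le_raise_ascent[of i n "u \<circ> tau i", OF i x(2) u'(3)]
        by (simp add: mem_bruhat_interval)
    qed
  qed
  assume "x \<in> bruhat_interval n u v"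
  then have x: "x \<in> Sym n" "rank_le n u x" "rank_le n x v" by (simp_all add: mem_bruhat_interval)
  show "x \<in> bruhat_interval n (u \<circ> tau i) (v \<circ> tau i) \<or> x \<circ> tau i \<in> bruhat_interval n (u \<circ> tau i) (v \<circ> tau i)"
  proof (cases "x i < x (Suc i)")
    case True
    then show ?thesis
      using x u' v' rank_le_lower_descent[OF i x(3) assms(6) True] rank_le_trans[OF u'(2) x(2)]
      by (simp add: mem_bruhat_interval)
  next
    case False
    then have "x (Suc i) < x i" using Sym_apply_Suc_neq[OF x(1), of i] by simp
    then show ?thesis
      using x u' v' Sym_comp_tau[OF x(1) i] rank_le_lift_descents[OF i x(3) assms(6)]
        rank_le_lift_descents[OF i x(2) _ assms(7)]
      by (simp add: mem_bruhat_interval)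
  qed
qed (use invariant in \<open>auto simp: mem_bruhat_interval\<close>)

lemma exists_ascending_on_blocks_interval:
  assumes invariant: "\<And>x i. x \<in> Sym n \<Longrightarrow> 1 \<le> i \<Longrightarrow> i < n \<Longrightarrow> \<beta> i = \<beta> (Suc i) \<Longrightarrow> f (x \<circ> tau i) = f x"
  shows "bruhat_le n u v \<Longrightarrow> \<exists>u' v'. bruhat_le n u' v' \<and> ascending_on_blocks n \<beta> v' \<and>
    f ` bruhat_interval n u' v' = f ` bruhat_interval n u v"
proof (induction "perm_length n v" arbitrary: u v rule: less_induct)
  case less
  then have u: "u \<in> Sym n" and v: "v \<in> Sym n" and uv: "rank_le n u v"
    by (simp_all add: bruhat_le_iff_rank_le)
  show ?case
  proof (cases "ascending_on_blocks n \<beta> v")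
    case True
    then show ?thesis using less.prems by blast
  next
    case False
    then obtain i where i: "1 \<le> i" "i < n" "\<beta> i = \<beta> (Suc i)" "v (Suc i) < v i"
      using Sym_apply_Suc_neq[OF v] by (auto simp: ascending_on_blocks_def dest: nat_neq_iff[THEN iffD1])
    have invariant_i: "\<And>x. x \<in> Sym n \<Longrightarrow> f (x \<circ> tau i) = f x" using invariant i(1-3) by blast
    have v': "v \<circ> tau i \<in> Sym n" using Sym_comp_tau[OF v i(1,2)] .
    have shorter: "perm_length n (v \<circ> tau i) < perm_length n v"
      using perm_length_descent[OF i(1,2,4)] by simp
    show ?thesis
    proof (cases "u (Suc i) < u i")
      case True
      have "bruhat_le n (u \<circ> tau i) (v \<circ> tau i)"
        using rank_le_lift_descents[OF i(1,2) uv i(4) True] Sym_comp_tau[OF u i(1,2)] v'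
        by (simp add: bruhat_le_iff_rank_le)
      then show ?thesis
        using less.hyps[OF shorter]
          image_bruhat_interval_drop_common_descent[where f = f, OF i(1,2) invariant_i u v i(4) True]
        by metis
    next
      case False
      then have "u i < u (Suc i)" using Sym_apply_Suc_neq[OF u, of i] by simp
      then have "bruhat_le n u (v \<circ> tau i)"
        using rank_le_lower_descent[OF i(1,2) uv i(4)] u v' by (simp add: bruhat_le_iff_rank_le)
      then show ?thesis
        using less.hyps[OF shorter]
          image_bruhat_interval_drop_descent[where f = f, OF i(1,2) invariant_i u v i(4) \<open>u i < u (Suc i)\<close>]
        by metis
    qed
  qed
qed

lemma inversions_ascending_on_blocks:
  fixes \<beta> :: "nat \<Rightarrow> 'a::linorder"
  assumes "mono \<beta>" "ascending_on_blocks n \<beta> v"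
  shows "inversions n v = {(a, b) \<in> inversions n v. \<beta> a < \<beta> b}"
proof -
  have "\<beta> a < \<beta> b" if "(a, b) \<in> inversions n v" for a b
  proof -
    have ab: "1 \<le> a" "a < b" "b \<le> n" "v b < v a" using that by (auto simp: inversions_def)
    then have "\<beta> a \<le> \<beta> b" using monoD[OF assms(1)] by simp
    moreover have "\<beta> a \<noteq> \<beta> b" using ascending_on_blocksD[OF assms _ ab(2,3)] ab(1,4) by force
    ultimately show ?thesis by simp
  qed
  then show ?thesis by auto
qed

text \<open>The fibre hypothesis says that \<open>x = v \<sigma>\<close> with \<open>\<sigma>\<close> preserving every block; then
  \<open>(c, e) \<mapsto> (\<sigma>\<^sup>-\<^sup>1 c, \<sigma>\<^sup>-\<^sup>1 e)\<close> maps inversions of \<open>v\<close> between blocks to those of \<open>x\<close>.\<close>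

lemma card_inversions_between_blocks_le:
  fixes \<beta> :: "nat \<Rightarrow> 'a::linorder"
  assumes "mono \<beta>" "x \<in> Sym n" "v \<in> Sym n"
    and fibre: "\<forall>k\<in>{1..n}. \<beta> (inv x k) = \<beta> (inv v k)"
  shows "card {(a, b) \<in> inversions n v. \<beta> a < \<beta> b} \<le> card {(a, b) \<in> inversions n x. \<beta> a < \<beta> b}"
proof (rule card_inj_on_le)
  let ?h = "\<lambda>(c, e). (inv x (v c), inv x (v e))"
  have \<beta>_h: "\<beta> (inv x (v c)) = \<beta> c" if "c \<in> {1..n}" for c
    using fibre Sym_apply_in[OF assms(3) that] assms(3) by force
  show "?h ` {(a, b) \<in> inversions n v. \<beta> a < \<beta> b} \<subseteq> {(a, b) \<in> inversions n x. \<beta> a < \<beta> b}"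
  proof clarify
    fix c e assume "(c, e) \<in> inversions n v" "\<beta> c < \<beta> e"
    then have ce: "c \<in> {1..n}" "e \<in> {1..n}" "v e < v c" "\<beta> c < \<beta> e" by (auto simp: inversions_def)
    then have "\<beta> (inv x (v c)) < \<beta> (inv x (v e))" using \<beta>_h by simp
    then have "inv x (v c) < inv x (v e)" using monoD[OF assms(1), of "inv x (v e)" "inv x (v c)"] by force
    then show "(inv x (v c), inv x (v e)) \<in> inversions n x \<and> \<beta> (inv x (v c)) < \<beta> (inv x (v e))"
      using ce \<beta>_h Sym_apply_in[OF Sym_inv[OF assms(2)]] Sym_apply_in[OF assms(3)] assms(2)
      by (simp add: inversions_def)
  qed
  show "inj_on ?h {(a, b) \<in> inversions n v. \<beta> a < \<beta> b}"
    using inj_on_subset[OF Sym_inj[OF Sym_inv[OF assms(2)]]] Sym_inj[OF assms(3)]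
    by (intro inj_onI) (auto dest: injD)
qed (rule finite_subset[OF _ finite_inversions[of n x]], blast)

lemma inversion_within_block:
  fixes \<beta> :: "nat \<Rightarrow> 'a::linorder"
  assumes "mono \<beta>" "v \<in> Sym n" "ascending_on_blocks n \<beta> v" "x \<in> Sym n" "x \<noteq> v"
    and fibre: "\<forall>k\<in>{1..n}. \<beta> (inv x k) = \<beta> (inv v k)"
  shows "\<exists>(a, b) \<in> inversions n x. \<beta> a = \<beta> b"
proof -
  define \<sigma> where "\<sigma> = inv v \<circ> x"
  have \<sigma>: "\<sigma> \<in> Sym n" unfolding \<sigma>_def by (intro Sym_comp Sym_inv assms)
  have \<beta>_\<sigma>: "\<beta> (\<sigma> t) = \<beta> t" if "t \<in> {1..n}" for t
  proof -
    have "\<beta> (inv x (x t)) = \<beta> (inv v (x t))" using fibre Sym_apply_in[OF assms(4) that] by blast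
    then show ?thesis using assms(4) by (simp add: \<sigma>_def)
  qed
  have "v \<circ> \<sigma> = x" using assms(2) by (simp add: \<sigma>_def fun_eq_iff)
  then have "\<sigma> \<noteq> id" using assms(5) by auto
  then obtain i where i: "1 \<le> i" "i < n" "\<not> \<sigma> i < \<sigma> (Suc i)"
    using Sym_ascending_eq_id[OF \<sigma>] by blast
  then have descent: "\<sigma> (Suc i) < \<sigma> i" using Sym_apply_Suc_neq[OF \<sigma>, of i] by simp
  have "\<beta> i \<le> \<beta> (Suc i)" "\<beta> (\<sigma> (Suc i)) \<le> \<beta> (\<sigma> i)"
    using descent monoD[OF assms(1)] by simp_all
  then have "\<beta> i = \<beta> (Suc i)" "\<beta> (\<sigma> (Suc i)) = \<beta> (\<sigma> i)" using \<beta>_\<sigma> i(1,2) by auto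
  moreover have "\<sigma> (Suc i) \<in> {1..n}" "\<sigma> i \<le> n" using Sym_apply_in[OF \<sigma>] i(1,2) by auto
  ultimately have "v (\<sigma> (Suc i)) < v (\<sigma> i)"
    using ascending_on_blocksD[OF assms(1,3) _ descent] by simp
  then have "(i, Suc i) \<in> inversions n x" using i(1,2) \<open>v \<circ> \<sigma> = x\<close> by (auto simp: inversions_def)
  with \<open>\<beta> i = \<beta> (Suc i)\<close> show ?thesis by blast
qed

theorem ascending_on_blocks_fibre_minimal:
  fixes \<beta> :: "nat \<Rightarrow> 'a::linorder"
  assumes "mono \<beta>" "v \<in> Sym n" "ascending_on_blocks n \<beta> v" "x \<in> Sym n" "bruhat_le n x v"
    and fibre: "\<forall>k\<in>{1..n}. \<beta> (inv x k) = \<beta> (inv v k)"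
  shows "x = v"
proof (rule ccontr)
  assume "x \<noteq> v"
  let ?between = "\<lambda>y. {(a, b) \<in> inversions n y. \<beta> a < \<beta> b}"
  have "perm_length n v = card (?between v)"
    unfolding perm_length_def using inversions_ascending_on_blocks[OF assms(1,3)] by simp
  also have "\<dots> \<le> card (?between x)"
    by (rule card_inversions_between_blocks_le[OF assms(1,4,2) fibre])
  also have "\<dots> < perm_length n x"
    unfolding perm_length_def
  proof (rule psubset_card_mono[OF finite_inversions])
    obtain a b where "(a, b) \<in> inversions n x" "\<beta> a = \<beta> b"
      using inversion_within_block[OF assms(1-4) \<open>x \<noteq> v\<close> fibre] by blast
    then have "(a, b) \<notin> ?between x" "(a, b) \<in> inversions n x" by simp_all
    then show "?between x \<subset> inversions n x" by blast
  qed
  finally show False using perm_length_mono[OF assms(5)] by simp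
qed


section \<open>Polytopes of Bruhat intervals with minimal top\<close>

theorem images_BI_gen:
  fixes \<beta> :: "nat \<Rightarrow> 'a::linorder" and f :: "(nat \<Rightarrow> nat) \<Rightarrow> nat \<Rightarrow> real"
  assumes "mono \<beta>"
    and invariant: "\<And>x i. x \<in> Sym n \<Longrightarrow> 1 \<le> i \<Longrightarrow> i < n \<Longrightarrow> \<beta> i = \<beta> (Suc i) \<Longrightarrow> f (x \<circ> tau i) = f x"
    and fibre: "\<And>x y. x \<in> Sym n \<Longrightarrow> y \<in> Sym n \<Longrightarrow> f x = f y \<Longrightarrow> \<forall>k\<in>{1..n}. \<beta> (inv x k) = \<beta> (inv y k)"
  shows "{f ` bruhat_interval n u v | u v. (u, v) \<in> BI_gen n f} =
    {f ` bruhat_interval n u v | u v. bruhat_le n u v}"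
proof (intro subset_antisym subsetI)
  fix P assume "P \<in> {f ` bruhat_interval n u v | u v. bruhat_le n u v}"
  then obtain u v where P: "P = f ` bruhat_interval n u v" and "bruhat_le n u v" by blast
  have "\<exists>u' v'. bruhat_le n u' v' \<and> ascending_on_blocks n \<beta> v' \<and>
      f ` bruhat_interval n u' v' = f ` bruhat_interval n u v"
    using invariant \<open>bruhat_le n u v\<close> by (rule exists_ascending_on_blocks_interval)
  then obtain u' v' where uv': "bruhat_le n u' v'" "ascending_on_blocks n \<beta> v'"
    "f ` bruhat_interval n u' v' = P"
    using P by blast
  have "(u', v') \<in> BI_gen n f"
    unfolding BI_gen_def
  proof (clarify, intro conjI ballI impI)
    show "u' \<in> Sym n" "v' \<in> Sym n" "bruhat_le n u' v'"
      using uv'(1) by (simp_all add: bruhat_le_iff_rank_le)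
    fix x assume x: "x \<in> Sym n" "f x = f v' \<and> bruhat_le n x v'"
    then show "x = v'"
      using ascending_on_blocks_fibre_minimal[OF assms(1) \<open>v' \<in> Sym n\<close> uv'(2) x(1)]
        fibre[OF x(1) \<open>v' \<in> Sym n\<close>]
      by blast
  qed
  then show "P \<in> {f ` bruhat_interval n u v | u v. (u, v) \<in> BI_gen n f}" using uv'(3) by blast
qed (auto simp: BI_gen_def)

lemma BI_gen_comp_inv:
  assumes "(u, v) \<in> BI_gen n (\<lambda>y. f (inv y))"
  shows "(inv u, inv v) \<in> BI_gen n f"
  unfolding BI_gen_def
proof (clarify, intro conjI ballI impI)
  have uv: "u \<in> Sym n" "v \<in> Sym n" "bruhat_le n u v"
    and minimal: "\<And>y. y \<in> Sym n \<Longrightarrow> f (inv y) = f (inv v) \<Longrightarrow> bruhat_le n y v \<Longrightarrow> y = v"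
    using assms by (auto simp: BI_gen_def)
  show "inv u \<in> Sym n" "inv v \<in> Sym n" "bruhat_le n (inv u) (inv v)"
    using uv by (simp_all add: Sym_inv bruhat_le_inv)
  fix x assume x: "x \<in> Sym n" "f x = f (inv v) \<and> bruhat_le n x (inv v)"
  then have "bruhat_le n (inv x) v" using bruhat_le_inv[of n x "inv v"] uv(2) by simp
  then have "inv x = v" using minimal[OF Sym_inv[OF x(1)]] x by simp
  then show "x = inv v" using x(1) by auto
qed

corollary images_BI_gen_left:
  fixes \<beta> :: "nat \<Rightarrow> 'a::linorder" and f :: "(nat \<Rightarrow> nat) \<Rightarrow> nat \<Rightarrow> real"
  assumes "mono \<beta>"
    and invariant: "\<And>x i. x \<in> Sym n \<Longrightarrow> 1 \<le> i \<Longrightarrow> i < n \<Longrightarrow> \<beta> i = \<beta> (Suc i) \<Longrightarrow> f (tau i \<circ> x) = f x"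
    and fibre: "\<And>x y. x \<in> Sym n \<Longrightarrow> y \<in> Sym n \<Longrightarrow> f x = f y \<Longrightarrow> \<forall>k\<in>{1..n}. \<beta> (x k) = \<beta> (y k)"
  shows "{f ` bruhat_interval n u v | u v. (u, v) \<in> BI_gen n f} =
    {f ` bruhat_interval n u v | u v. bruhat_le n u v}"
proof (intro subset_antisym subsetI)
  let ?g = "\<lambda>y. f (inv y)"
  have image_inv: "f ` bruhat_interval n (inv u) (inv v) = ?g ` bruhat_interval n u v"
    if "u \<in> Sym n" "v \<in> Sym n" for u v
    unfolding image_inv_bruhat_interval[OF that, symmetric] by (simp add: image_image)
  have images_g: "{?g ` bruhat_interval n u v | u v. (u, v) \<in> BI_gen n ?g} =
    {?g ` bruhat_interval n u v | u v. bruhat_le n u v}"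
  proof (rule images_BI_gen[OF assms(1)])
    fix x i assume "x \<in> Sym n" "1 \<le> i" "i < n" "\<beta> i = \<beta> (Suc i)"
    moreover have "inv (x \<circ> tau i) = tau i \<circ> inv x"
      using o_inv_distrib[OF Sym_bij[OF \<open>x \<in> Sym n\<close>] Sym_bij[OF tau_in_Sym[OF \<open>1 \<le> i\<close> \<open>i < n\<close>]]]
      by (simp add: inv_tau)
    ultimately show "?g (x \<circ> tau i) = ?g x" using invariant Sym_inv by simp
  next
    fix x y assume "x \<in> Sym n" "y \<in> Sym n" "?g x = ?g y"
    then show "\<forall>k\<in>{1..n}. \<beta> (inv x k) = \<beta> (inv y k)" using fibre Sym_inv by blast
  qed
  fix P assume "P \<in> {f ` bruhat_interval n u v | u v. bruhat_le n u v}"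
  then obtain u v where P: "P = f ` bruhat_interval n u v" and uv: "bruhat_le n u v" by blast
  then have "u \<in> Sym n" "v \<in> Sym n" by (simp_all add: bruhat_le_iff_rank_le)
  then have "P = ?g ` bruhat_interval n (inv u) (inv v)"
    using image_inv[OF Sym_inv Sym_inv, of u v] P by simp
  then have "P \<in> {?g ` bruhat_interval n u v | u v. (u, v) \<in> BI_gen n ?g}"
    using bruhat_le_inv[OF uv] unfolding images_g by blast
  then obtain u' v' where uv': "(u', v') \<in> BI_gen n ?g" and P': "P = ?g ` bruhat_interval n u' v'"
    by blast
  then have "u' \<in> Sym n" "v' \<in> Sym n" by (simp_all add: BI_gen_def)
  then have "P = f ` bruhat_interval n (inv u') (inv v')" using image_inv P' by simp
  then show "P \<in> {f ` bruhat_interval n u v | u v. (u, v) \<in> BI_gen n f}"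
    using BI_gen_comp_inv[OF uv'] by blast
qed (auto simp: BI_gen_def)

section \<open>The untwisted and the twisted projection\<close>

text \<open>Block indices of a position (for \<open>\<psi>\<close>) and of a value (for \<open>\<phi>\<close>): coordinate \<open>k\<close> of
  \<open>\<pi>\<^sup>d \<psi>(x)\<close> is \<open>s\<close> minus the block index of \<open>x\<^sup>-\<^sup>1(k)\<close>, that of \<open>\<pi>\<^sup>d \<phi>(x)\<close> is the block
  index of \<open>x(k)\<close>.\<close>

definition psi_block :: "nat list \<Rightarrow> nat \<Rightarrow> nat" where
  "psi_block d m = card {j. j < length d \<and> d ! j < m}"

definition phi_block :: "nat \<Rightarrow> nat list \<Rightarrow> nat \<Rightarrow> nat" where
  "phi_block n d m = card {j. j < length d \<and> n + 1 - d ! j \<le> m}"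

lemma mono_psi_block: "mono (psi_block d)"
  unfolding psi_block_def by (intro monoI card_mono) auto

lemma mono_phi_block: "mono (phi_block n d)"
  unfolding phi_block_def by (intro monoI card_mono) auto

lemma psi_block_add_card: "psi_block d m + card {j. j < length d \<and> m \<le> d ! j} = length d"
proof -
  have "card ({j. j < length d \<and> d ! j < m} \<union> {j. j < length d \<and> m \<le> d ! j})
      = card {j. j < length d \<and> d ! j < m} + card {j. j < length d \<and> m \<le> d ! j}"
    by (rule card_Un_disjoint) auto
  moreover have "{j. j < length d \<and> d ! j < m} \<union> {j. j < length d \<and> m \<le> d ! j} = {..<length d}"
    by auto
  ultimately show ?thesis unfolding psi_block_def by simp
qed

lemma psi_block_eq_Suc_not_member:
  assumes "psi_block d i = psi_block d (Suc i)" "j < length d"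
  shows "d ! j \<noteq> i"
proof
  assume "d ! j = i"
  then have "{j. j < length d \<and> d ! j < i} \<subset> {j. j < length d \<and> d ! j < Suc i}"
    using assms(2) by auto
  then have "psi_block d i < psi_block d (Suc i)"
    unfolding psi_block_def by (rule psubset_card_mono[rotated]) auto
  then show False using assms(1) by simp
qed

lemma pipsi_comp_tau:
  assumes "1 \<le> i" "psi_block d i = psi_block d (Suc i)"
  shows "pipsi n d (y \<circ> tau i) = pipsi n d y"
proof -
  have "(y \<circ> tau i) ` {1..d ! j} = y ` {1..d ! j}" if "j < length d" for j
  proof -
    have "(y \<circ> tau i) ` {1..d ! j} = y ` tau i ` {1..d ! j}" by (simp only: image_comp)
    then show ?thesis
      using tau_image_atLeastAtMost[OF assms(1) psi_block_eq_Suc_not_member[OF assms(2) that]] by simp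
  qed
  then show ?thesis unfolding pipsi_def by (intro ext sum.cong) auto
qed

lemma pipsi_apply:
  assumes "y \<in> Sym n"
  shows "pipsi n d y k =
    (if k \<in> {1..n} then real (card {j. j < length d \<and> inv y k \<le> d ! j}) else 0)"
proof (cases "k \<in> {1..n}")
  case True
  have "k \<in> y ` {1..m} \<longleftrightarrow> inv y k \<le> m" for m
  proof
    assume "k \<in> y ` {1..m}"
    then show "inv y k \<le> m" using assms by auto
  next
    assume "inv y k \<le> m"
    moreover have "inv y k \<in> {1..n}" using Sym_apply_in[OF Sym_inv[OF assms] True] .
    ultimately have "inv y k \<in> {1..m}" by simp
    moreover have "k = y (inv y k)" using assms by simp
    ultimately show "k \<in> y ` {1..m}" by blast
  qed
  then have "e_set n (y ` {1..m}) k = of_bool (inv y k \<le> m)" for m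
    unfolding e_set_def using True by simp
  then have "pipsi n d y k = (\<Sum>j<length d. (of_bool (inv y k \<le> d ! j) :: real))"
    unfolding pipsi_def by simp
  also have "\<dots> = real (card {j. j < length d \<and> inv y k \<le> d ! j})"
    by (simp add: Collect_conj_eq lessThan_def Int_commute)
  finally show ?thesis using True by simp
next
  case False
  then have "e_set n B k = 0" for B by (simp add: e_set_def)
  then show ?thesis unfolding if_not_P[OF False] by (simp add: pipsi_def)
qed

lemma pipsi_fibre:
  assumes "x \<in> Sym n" "y \<in> Sym n" "pipsi n d x = pipsi n d y"
  shows "\<forall>k\<in>{1..n}. psi_block d (inv x k) = psi_block d (inv y k)"
proof
  fix k assume "k \<in> {1..n}"
  then have "card {j. j < length d \<and> inv x k \<le> d ! j} = card {j. j < length d \<and> inv y k \<le> d ! j}"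
    using pipsi_apply[OF assms(1), of d k] pipsi_apply[OF assms(2), of d k] assms(3) by simp
  then show "psi_block d (inv x k) = psi_block d (inv y k)"
    using psi_block_add_card[of d "inv x k"] psi_block_add_card[of d "inv y k"] by simp
qed

lemma piphi_apply: "piphi n d x k = (if k \<in> {1..n} then real (phi_block n d (x k)) else 0)"
  unfolding piphi_def phi_block_def by simp

lemma piphi_tau_comp:
  assumes "phi_block n d i = phi_block n d (Suc i)"
  shows "piphi n d (tau i \<circ> x) = piphi n d x"
proof -
  have "phi_block n d (tau i m) = phi_block n d m" for m
    using assms by (cases "m = i"; cases "m = Suc i") auto
  then show ?thesis by (simp add: fun_eq_iff piphi_apply)
qed

lemma piphi_fibre:
  assumes "piphi n d x = piphi n d y"
  shows "\<forall>k\<in>{1..n}. phi_block n d (x k) = phi_block n d (y k)"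
  using assms by (metis of_nat_eq_iff piphi_apply)

lemma piphi_eq_pipsi_twist:
  assumes "x \<in> Sym n"
  shows "pipsi n d (twist n x) = piphi n d x"
proof
  fix k
  show "pipsi n d (twist n x) k = piphi n d x k"
  proof (cases "k \<in> {1..n}")
    case True
    have "x k \<in> {1..n}" using Sym_apply_in[OF assms True] .
    then have "inv (twist n x) k = n + 1 - x k"
      using inv_twist[OF assms] by (simp add: w0_def)
    moreover have "{j. j < length d \<and> n + 1 - x k \<le> d ! j} = {j. j < length d \<and> n + 1 - d ! j \<le> x k}"
      using \<open>x k \<in> {1..n}\<close> by auto
    ultimately show ?thesis
      using True pipsi_apply[OF twist_in_Sym[OF assms]] by (simp add: piphi_def)
  next
    case False
    then show ?thesis
      by (simp only: pipsi_apply[OF twist_in_Sym[OF assms]] piphi_apply if_not_P[OF False] if_False)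
  qed
qed

lemma images_piphi_eq_images_pipsi:
  "{piphi n d ` bruhat_interval n u v | u v. bruhat_le n u v} =
    {pipsi n d ` bruhat_interval n u v | u v. bruhat_le n u v}"
proof -
  have image_twist: "piphi n d ` bruhat_interval n u v =
      pipsi n d ` bruhat_interval n (twist n v) (twist n u)"
    if "u \<in> Sym n" "v \<in> Sym n" for u v
  proof -
    have "piphi n d ` bruhat_interval n u v = (\<lambda>x. pipsi n d (twist n x)) ` bruhat_interval n u v"
      by (intro image_cong) (simp_all add: piphi_eq_pipsi_twist mem_bruhat_interval)
    then show ?thesis unfolding image_twist_bruhat_interval[OF that, symmetric] image_image .
  qed
  show ?thesis
  proof (intro subset_antisym subsetI)
    fix P assume "P \<in> {piphi n d ` bruhat_interval n u v | u v. bruhat_le n u v}"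
    then obtain u v where P: "P = piphi n d ` bruhat_interval n u v" and uv: "bruhat_le n u v"
      by blast
    then have u: "u \<in> Sym n" and v: "v \<in> Sym n" by (simp_all add: bruhat_le_iff_rank_le)
    then have "bruhat_le n (twist n v) (twist n u)"
      using uv twist_rank_le_iff[OF u v] by (simp add: bruhat_le_iff_rank_le twist_in_Sym)
    moreover have "P = pipsi n d ` bruhat_interval n (twist n v) (twist n u)"
      using image_twist[OF u v] P by simp
    ultimately show "P \<in> {pipsi n d ` bruhat_interval n u v | u v. bruhat_le n u v}" by blast
  next
    fix P assume "P \<in> {pipsi n d ` bruhat_interval n u v | u v. bruhat_le n u v}"
    then obtain a b where P: "P = pipsi n d ` bruhat_interval n a b" and ab: "bruhat_le n a b" by blast
    then have a: "a \<in> Sym n" and b: "b \<in> Sym n" by (simp_all add: bruhat_le_iff_rank_le)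
    define u v where "u = inv (b \<circ> w0 n)" and "v = inv (a \<circ> w0 n)"
    have u: "u \<in> Sym n" "twist n u = b" and v: "v \<in> Sym n" "twist n v = a"
      using twist_inv_comp_w0[OF a] twist_inv_comp_w0[OF b] by (simp_all add: u_def v_def)
    then have "bruhat_le n u v"
      using ab twist_rank_le_iff[OF u(1) v(1)] by (simp add: bruhat_le_iff_rank_le)
    moreover have "P = piphi n d ` bruhat_interval n u v" using image_twist[OF u(1) v(1)] u v P by simp
    ultimately show "P \<in> {piphi n d ` bruhat_interval n u v | u v. bruhat_le n u v}" by blast
  qed
qed

theorem theorem4p6:
  fixes n :: nat and d :: "nat list"
  assumes "n \<ge> 1"
    and "d \<noteq> []"
    and "sorted_wrt (<) d"
    and "\<forall>j\<in>set d. 1 \<le> j \<and> j \<le> n"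
  shows "{Q d n u v | u v. (u, v) \<in> BI d n} = {Q_tw d n u v | u v. (u, v) \<in> BI_tw d n}"
proof -
  have polytopes: "{conv (f ` bruhat_interval n u v) | u v. P u v} =
      conv ` {f ` bruhat_interval n u v | u v. P u v}" for f P
    by blast
  have "{Q d n u v | u v. (u, v) \<in> BI d n} =
      conv ` {piphi n d ` bruhat_interval n u v | u v. (u, v) \<in> BI_gen n (piphi n d)}"
    unfolding Q_def BI_def polytopes ..
  also have "\<dots> = conv ` {piphi n d ` bruhat_interval n u v | u v. bruhat_le n u v}"
    by (subst images_BI_gen_left[OF mono_phi_block]) (auto intro: piphi_tau_comp dest: piphi_fibre)
  also have "\<dots> = conv ` {pipsi n d ` bruhat_interval n u v | u v. bruhat_le n u v}"
    by (simp only: images_piphi_eq_images_pipsi)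
  also have "\<dots> = conv ` {pipsi n d ` bruhat_interval n u v | u v. (u, v) \<in> BI_gen n (pipsi n d)}"
    by (subst images_BI_gen[OF mono_psi_block]) (auto intro: pipsi_comp_tau dest: pipsi_fibre)
  also have "\<dots> = {Q_tw d n u v | u v. (u, v) \<in> BI_tw d n}"
    unfolding Q_tw_def BI_tw_def polytopes ..
  finally show ?thesis .
qed

end
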